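(* For every $u\in\mathbb{C}$ there exists $C>0$ such that $|\langle j|W(u)|j\rangle|\ge\frac{C}{j^{3/8}}$ for infinitely many $j\in\mathbb{Z}_{\ge0}$.
   Context: One-mode Fock space: $\ell^2(\mathbb{Z}_{\ge 0})$ with orthonormal particle basis $\{|k\rangle\}_{k\ge0}$. For $v\in\mathbb{C}$ the exponential vector is $|e(v)\rangle=\sum_{k\ge0}\frac{v^k}{\sqrt{k!}}|k\rangle$, and for $u\in\mathbb{C}$ the Weyl unitary $W(u)$ is the unitary operator with $W(u)|e(v)\rangle=\exp(-\tfrac12|u|^2-\bar uv)|e(u+v)\rangle$ for all $v\in\mathbb{C}$. *)

theory Defs
  imports "HOL-Analysis.Analysis"
begin

definition fock :: "(nat \<Rightarrow> complex) set" where
  "fock = {x. summable (\<lambda>k. (cmod (x k))\<^sup>2)}"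

definition fock_inner :: "(nat \<Rightarrow> complex) \<Rightarrow> (nat \<Rightarrow> complex) \<Rightarrow> complex" where
  "fock_inner x y = (\<Sum>k. cnj (x k) * y k)"

definition fock_basis :: "nat \<Rightarrow> (nat \<Rightarrow> complex)" where
  "fock_basis j = (\<lambda>k. if k = j then 1 else 0)"

definition expvec :: "complex \<Rightarrow> (nat \<Rightarrow> complex)" where
  "expvec v = (\<lambda>k. v ^ k / complex_of_real (sqrt (fact k)))"

definition fock_unitary :: "((nat \<Rightarrow> complex) \<Rightarrow> (nat \<Rightarrow> complex)) \<Rightarrow> bool" where
  "fock_unitary T \<longleftrightarrow>
     (\<forall>x. x \<notin> fock \<longrightarrow> T x = (\<lambda>_. 0)) \<and>
     T ` fock = fock \<and>
     (\<forall>x\<in>fock. \<forall>y\<in>fock. \<forall>a b. T (\<lambda>k. a * x k + b * y k) = (\<lambda>k. a * T x k + b * T y k)) \<and>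
     (\<forall>x\<in>fock. \<forall>y\<in>fock. fock_inner (T x) (T y) = fock_inner x y)"

definition is_weyl :: "complex \<Rightarrow> ((nat \<Rightarrow> complex) \<Rightarrow> (nat \<Rightarrow> complex)) \<Rightarrow> bool" where
  "is_weyl u T \<longleftrightarrow> fock_unitary T \<and>
     (\<forall>v. T (expvec v) =
        (\<lambda>k. exp (- complex_of_real ((cmod u)\<^sup>2 / 2) - cnj u * v) * expvec (u + v) k))"

text \<open>The Weyl unitary W(u) (unique by totality of exponential vectors).\<close>
definition weyl :: "complex \<Rightarrow> (nat \<Rightarrow> complex) \<Rightarrow> (nat \<Rightarrow> complex)" where
  "weyl u = (THE T. is_weyl u T)"

definition weyl_elem :: "complex \<Rightarrow> nat \<Rightarrow> nat \<Rightarrow> complex" where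
  "weyl_elem u k j = fock_inner (fock_basis k) (weyl u (fock_basis j))"

end

theory Submission
  imports Defs "HOL-Real_Asymp.Real_Asymp"
begin

(*
  Expanding W(u)|e(v)> in powers of v produces an explicit matrix for W(u) (weyl_matrix).
  Because W(-u) W(u) acts as the identity on exponential vectors, its rows and columns are
  orthonormal, so the matrix defines a unitary operator with the defining property of W(u);
  exponential vectors determine such a unitary uniquely.  The diagonal entries are
  <j|W(u)|j> = exp(-x/2) L_j(x) with x = |u|^2 and L_j the Laguerre polynomial.

  For the lower bound, suppose L_j(x)^2 <= K j^(-3/4) for all large j, so that
  E_n = sum_{i<n} L_i(x)^2 = O(n^(1/4)).  Writing P = L_n(x) and T = L_n^(1)(x), a
  Christoffel-Darboux type identity gives E_n = x T^2 - x P T + n P^2.  The neighbouring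
  quadratic form V_n = x T^2 - (x + 1/2) P T + (n + 1/2) P^2 is comparable to E_n for large n,
  and V_(n+1) - V_n = P^2/2 + x T^2/(2(n+1)) >= V_n/(3n).  Hence V_n^3/n is eventually
  nondecreasing, so E_n grows at least like n^(1/3): a contradiction.
*)

section \<open>The Fock space\<close>

definition fock_sqnorm :: "(nat \<Rightarrow> complex) \<Rightarrow> real" where
  "fock_sqnorm y = (\<Sum>k. (cmod (y k))^2)"

definition fock_truncate :: "nat \<Rightarrow> (nat \<Rightarrow> complex) \<Rightarrow> nat \<Rightarrow> complex" where
  "fock_truncate N y = (\<lambda>j. if j < N then y j else 0)"

definition fock_tail :: "nat \<Rightarrow> (nat \<Rightarrow> complex) \<Rightarrow> nat \<Rightarrow> complex" where
  "fock_tail N y = (\<lambda>j. if j < N then 0 else y j)"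

lemma mem_fock_iff: "y \<in> fock \<longleftrightarrow> summable (\<lambda>k. (cmod (y k))^2)"
  by (simp add: fock_def)

lemma fock_sqnorm_nonneg: "y \<in> fock \<Longrightarrow> fock_sqnorm y \<ge> 0"
  unfolding fock_sqnorm_def mem_fock_iff by (auto intro: suminf_nonneg)

lemma fock_sqnorm_sums: "y \<in> fock \<Longrightarrow> (\<lambda>k. (cmod (y k))^2) sums fock_sqnorm y"
  unfolding fock_sqnorm_def mem_fock_iff by (simp add: summable_sums)

lemma cmod_add_sq_le: "(cmod (a + b))^2 \<le> 2 * (cmod a)^2 + 2 * (cmod b)^2"
proof -
  have "(cmod (a + b))^2 \<le> (cmod a + cmod b)^2"
    using norm_triangle_ineq by (intro power_mono) auto
  also have "\<dots> \<le> 2 * (cmod a)^2 + 2 * (cmod b)^2"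
    using sum_squares_bound[of "cmod a" "cmod b"] by (simp add: power2_sum)
  finally show ?thesis .
qed

lemma fock_add: "y \<in> fock \<Longrightarrow> z \<in> fock \<Longrightarrow> (\<lambda>k. y k + z k) \<in> fock"
  unfolding mem_fock_iff
  by (rule summable_comparison_test'[where g="\<lambda>k. 2 * (cmod (y k))^2 + 2 * (cmod (z k))^2"])
     (auto intro!: summable_add summable_mult cmod_add_sq_le)

lemma fock_scale: "y \<in> fock \<Longrightarrow> (\<lambda>k. c * y k) \<in> fock"
  unfolding mem_fock_iff by (simp add: norm_mult power_mult_distrib summable_mult)

lemma fock_lin: "y \<in> fock \<Longrightarrow> z \<in> fock \<Longrightarrow> (\<lambda>k. a * y k + b * z k) \<in> fock"
  using fock_add fock_scale by blast

lemma fock_diff: "y \<in> fock \<Longrightarrow> z \<in> fock \<Longrightarrow> (\<lambda>k. y k - z k) \<in> fock"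
  using fock_lin[of y z 1 "-1"] by simp

lemma fock_finite_support: "(\<And>k. k \<ge> N \<Longrightarrow> y k = 0) \<Longrightarrow> y \<in> fock"
  unfolding mem_fock_iff by (rule summable_finite[of "{..<N}"]) auto

lemma fock_basis_in_fock: "fock_basis j \<in> fock"
  by (rule fock_finite_support[of "Suc j"]) (auto simp: fock_basis_def)

lemma fock_truncate_in_fock: "fock_truncate N y \<in> fock"
  by (rule fock_finite_support[of N]) (auto simp: fock_truncate_def)

lemma fock_tail_eq_diff: "fock_tail N y = (\<lambda>j. y j - fock_truncate N y j)"
  by (auto simp: fock_tail_def fock_truncate_def)

lemma fock_tail_in_fock: "y \<in> fock \<Longrightarrow> fock_tail N y \<in> fock"
  unfolding fock_tail_eq_diff by (intro fock_diff fock_truncate_in_fock)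

lemma fock_sqnorm_tail_tendsto_0:
  assumes "y \<in> fock"
  shows "(\<lambda>N. fock_sqnorm (fock_tail N y)) \<longlonglongrightarrow> 0"
proof -
  have "fock_sqnorm (fock_tail N y) = fock_sqnorm y - (\<Sum>k<N. (cmod (y k))^2)" for N
  proof -
    have "(\<lambda>k. (cmod (fock_truncate N y k))^2) sums (\<Sum>k<N. (cmod (fock_truncate N y k))^2)"
      by (rule sums_finite) (auto simp: fock_truncate_def)
    then have "(\<lambda>k. (cmod (fock_truncate N y k))^2) sums (\<Sum>k<N. (cmod (y k))^2)"
      by (simp add: fock_truncate_def)
    then have "(\<lambda>k. (cmod (y k))^2 - (cmod (fock_truncate N y k))^2)
        sums (fock_sqnorm y - (\<Sum>k<N. (cmod (y k))^2))"
      by (intro sums_diff fock_sqnorm_sums assms)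
    moreover have "(cmod (y k))^2 - (cmod (fock_truncate N y k))^2 = (cmod (fock_tail N y k))^2" for k
      by (simp add: fock_tail_def fock_truncate_def)
    ultimately show ?thesis
      unfolding fock_sqnorm_def[of "fock_tail N y"] by (simp add: sums_iff)
  qed
  moreover have "(\<lambda>N. fock_sqnorm y - (\<Sum>k<N. (cmod (y k))^2)) \<longlonglongrightarrow> fock_sqnorm y - fock_sqnorm y"
    using assms unfolding mem_fock_iff fock_sqnorm_def by (intro tendsto_diff tendsto_const summable_LIMSEQ)
  ultimately show ?thesis
    by simp
qed

lemma summable_cmod_mult:
  assumes "y \<in> fock" "z \<in> fock"
  shows "summable (\<lambda>k. cmod (y k) * cmod (z k))"
proof (rule summable_comparison_test'[where g="\<lambda>k. (cmod (y k))^2 + (cmod (z k))^2"])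
  show "summable (\<lambda>k. (cmod (y k))^2 + (cmod (z k))^2)"
    using assms unfolding mem_fock_iff by (intro summable_add)
  show "norm (cmod (y k) * cmod (z k)) \<le> (cmod (y k))^2 + (cmod (z k))^2" for k
  proof -
    define a b where "a = cmod (y k)" and "b = cmod (z k)"
    have "0 \<le> a * b" and "2 * (a * b) \<le> a^2 + b^2"
      using sum_squares_bound[of a b] by (simp_all add: a_def b_def mult.assoc)
    then show ?thesis
      unfolding a_def[symmetric] b_def[symmetric] by simp
  qed
qed

lemma summable_fock_mult_gen:
  assumes "y \<in> fock" "z \<in> fock" and "\<And>w. cmod (f w) = cmod w"
  shows "summable (\<lambda>k. f (y k) * z k)"
  by (rule summable_norm_cancel, rule summable_comparison_test'[OF summable_cmod_mult[OF assms(1,2)]])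
    (simp add: norm_mult assms(3))

lemma summable_fock_inner: "y \<in> fock \<Longrightarrow> z \<in> fock \<Longrightarrow> summable (\<lambda>k. cnj (y k) * z k)"
  by (rule summable_fock_mult_gen[where f=cnj]) auto

lemma summable_fock_mult: "y \<in> fock \<Longrightarrow> z \<in> fock \<Longrightarrow> summable (\<lambda>k. y k * z k)"
  by (rule summable_fock_mult_gen[where f="\<lambda>w. w"]) auto

lemma suminf_cmod_mult_le:
  assumes "y \<in> fock" "z \<in> fock"
  shows "(\<Sum>k. cmod (y k) * cmod (z k)) \<le> sqrt (fock_sqnorm y) * sqrt (fock_sqnorm z)"
proof (rule suminf_le_const[OF summable_cmod_mult[OF assms]])
  have partial: "L2_set (\<lambda>k. cmod (w k)) {..<n} \<le> sqrt (fock_sqnorm w)" if "w \<in> fock" for w n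
  proof -
    have "(\<Sum>k<n. (cmod (w k))^2) \<le> fock_sqnorm w"
      using that unfolding fock_sqnorm_def mem_fock_iff by (intro sum_le_suminf) auto
    then show ?thesis
      unfolding L2_set_def by simp
  qed
  fix n
  have "(\<Sum>k<n. cmod (y k) * cmod (z k)) \<le> L2_set (\<lambda>k. cmod (y k)) {..<n} * L2_set (\<lambda>k. cmod (z k)) {..<n}"
    using L2_set_mult_ineq[of "\<lambda>k. cmod (y k)" "\<lambda>k. cmod (z k)" "{..<n}"] by simp
  also have "\<dots> \<le> sqrt (fock_sqnorm y) * sqrt (fock_sqnorm z)"
    using assms by (intro mult_mono partial) (auto simp: L2_set_def fock_sqnorm_nonneg intro: sum_nonneg)
  finally show "(\<Sum>k<n. cmod (y k) * cmod (z k)) \<le> sqrt (fock_sqnorm y) * sqrt (fock_sqnorm z)" .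
qed

lemma cmod_suminf_mult_le:
  assumes "y \<in> fock" "z \<in> fock"
  shows "cmod (\<Sum>k. y k * z k) \<le> sqrt (fock_sqnorm y) * sqrt (fock_sqnorm z)"
proof -
  have "cmod (\<Sum>k. y k * z k) \<le> (\<Sum>k. cmod (y k) * cmod (z k))"
    using summable_norm[of "\<lambda>k. y k * z k"] summable_cmod_mult[OF assms] by (simp add: norm_mult)
  also have "\<dots> \<le> sqrt (fock_sqnorm y) * sqrt (fock_sqnorm z)"
    by (rule suminf_cmod_mult_le[OF assms])
  finally show ?thesis .
qed

lemma cmod_le_sqrt_fock_sqnorm:
  assumes "y \<in> fock"
  shows "cmod (y k) \<le> sqrt (fock_sqnorm y)"
proof -
  have "(\<Sum>i\<in>{k}. (cmod (y i))^2) \<le> fock_sqnorm y"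
    using assms unfolding fock_sqnorm_def mem_fock_iff by (intro sum_le_suminf) auto
  then show ?thesis
    by (simp add: real_le_rsqrt)
qed

lemma tendsto_truncate:
  assumes "y \<in> fock"
    and "\<And>N. cmod (f y - f (fock_truncate N y)) \<le> sqrt (fock_sqnorm (fock_tail N y))"
  shows "(\<lambda>N. f (fock_truncate N y)) \<longlonglongrightarrow> f y"
proof -
  have "(\<lambda>N. sqrt (fock_sqnorm (fock_tail N y))) \<longlonglongrightarrow> 0"
    using tendsto_real_sqrt[OF fock_sqnorm_tail_tendsto_0[OF assms(1)]] by simp
  then have "(\<lambda>N. f y - f (fock_truncate N y)) \<longlonglongrightarrow> 0"
    by (rule Lim_null_comparison[rotated]) (use assms(2) in simp)
  from tendsto_diff[OF tendsto_const[of "f y"] this] show ?thesis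
    by simp
qed

lemma fock_inner_sums: "y \<in> fock \<Longrightarrow> z \<in> fock \<Longrightarrow> (\<lambda>k. cnj (y k) * z k) sums fock_inner y z"
  unfolding fock_inner_def by (intro summable_sums summable_fock_inner)

lemma fock_of_sums_mult_cnj:
  assumes "(\<lambda>j. z j * cnj (z j)) sums of_real S"
  shows "z \<in> fock" and "fock_sqnorm z = S"
proof -
  have "(\<lambda>j. Re (z j * cnj (z j))) sums Re (of_real S)"
    using assms by (simp add: sums_complex_iff)
  then have "(\<lambda>j. (cmod (z j))^2) sums S"
    by (simp add: complex_norm_square[symmetric])
  then show "z \<in> fock" and "fock_sqnorm z = S"
    unfolding mem_fock_iff fock_sqnorm_def by (auto simp: sums_iff)
qed

lemma fock_sqnorm_eq_inner:
  assumes "y \<in> fock"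
  shows "fock_sqnorm y = Re (fock_inner y y)"
proof -
  have "(\<lambda>k. Re (cnj (y k) * y k)) sums Re (fock_inner y y)"
    using fock_inner_sums[OF assms assms] by (simp add: sums_complex_iff)
  moreover have "Re (cnj (y k) * y k) = (cmod (y k))^2" for k
    by (metis Re_complex_of_real complex_norm_square mult.commute)
  ultimately show ?thesis
    using fock_sqnorm_sums[OF assms] sums_unique2 by force
qed

lemma fock_sqnorm_add:
  assumes y: "y \<in> fock" and z: "z \<in> fock"
  shows "fock_sqnorm (\<lambda>k. y k + z k) = fock_sqnorm y + fock_sqnorm z + 2 * Re (fock_inner y z)"
proof -
  have "(\<lambda>k. (cmod (y k))^2 + (cmod (z k))^2 + 2 * Re (cnj (y k) * z k))
      sums (fock_sqnorm y + fock_sqnorm z + 2 * Re (fock_inner y z))"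
    using fock_inner_sums[OF y z] by (intro sums_add sums_mult fock_sqnorm_sums y z) (simp add: sums_complex_iff)
  moreover have "(cmod (y k + z k))^2 = (cmod (y k))^2 + (cmod (z k))^2 + 2 * Re (cnj (y k) * z k)" for k
    unfolding cmod_power2 by (simp add: power2_eq_square algebra_simps)
  ultimately show ?thesis
    using fock_sqnorm_sums[OF fock_add[OF y z]] sums_unique2 by force
qed

lemma fock_inner_scale:
  assumes y: "y \<in> fock" and z: "z \<in> fock"
  shows "fock_inner y (\<lambda>k. c * z k) = c * fock_inner y z"
proof -
  have "(\<lambda>k. cnj (y k) * (c * z k)) sums (c * fock_inner y z)"
    using sums_mult[OF fock_inner_sums[OF y z], of c] by (simp add: mult_ac)
  then show ?thesis
    using fock_inner_sums[OF y fock_scale[OF z]] sums_unique2 by blast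
qed

section \<open>Unitary operators on the Fock space\<close>

lemma fock_unitary_fock: "fock_unitary T \<Longrightarrow> y \<in> fock \<Longrightarrow> T y \<in> fock"
  unfolding fock_unitary_def by blast

lemma fock_unitary_linear:
  "fock_unitary T \<Longrightarrow> y \<in> fock \<Longrightarrow> z \<in> fock \<Longrightarrow> T (\<lambda>k. a * y k + b * z k) = (\<lambda>k. a * T y k + b * T z k)"
  unfolding fock_unitary_def by blast

lemma fock_unitary_sqnorm:
  assumes T: "fock_unitary T" and y: "y \<in> fock"
  shows "fock_sqnorm (T y) = fock_sqnorm y"
proof -
  have "fock_inner (T y) (T y) = fock_inner y y"
    using T y unfolding fock_unitary_def by blast
  then show ?thesis
    using fock_sqnorm_eq_inner[OF y] fock_sqnorm_eq_inner[OF fock_unitary_fock[OF T y]] by simp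
qed

lemma fock_unitary_truncate:
  assumes T: "fock_unitary T"
  shows "T (fock_truncate N y) k = (\<Sum>j<N. y j * T (fock_basis j) k)"
proof (induction N)
  case 0
  have "fock_truncate 0 y = (\<lambda>k. 0 * fock_basis 0 k + 0 * fock_basis 0 k)"
    by (simp add: fock_truncate_def)
  moreover have "T (\<lambda>k. 0 * fock_basis 0 k + 0 * fock_basis 0 k) = (\<lambda>k. 0 * T (fock_basis 0) k + 0 * T (fock_basis 0) k)"
    by (rule fock_unitary_linear[OF T fock_basis_in_fock fock_basis_in_fock])
  ultimately show ?case
    by simp
next
  case (Suc N)
  have "fock_truncate (Suc N) y = (\<lambda>i. 1 * fock_truncate N y i + y N * fock_basis N i)"
    by (auto simp: fock_truncate_def fock_basis_def less_Suc_eq)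
  moreover have "T (\<lambda>i. 1 * fock_truncate N y i + y N * fock_basis N i)
      = (\<lambda>k. 1 * T (fock_truncate N y) k + y N * T (fock_basis N) k)"
    by (rule fock_unitary_linear[OF T fock_truncate_in_fock fock_basis_in_fock])
  ultimately show ?case
    using Suc by simp
qed

lemma fock_unitary_expansion:
  assumes T: "fock_unitary T" and y: "y \<in> fock"
  shows "(\<lambda>j. y j * T (fock_basis j) k) sums T y k"
proof -
  have "(\<lambda>N. T (fock_truncate N y) k) \<longlonglongrightarrow> T y k"
  proof (rule tendsto_truncate[OF y])
    fix N
    have tail: "fock_tail N y \<in> fock"
      by (rule fock_tail_in_fock[OF y])
    have "T y k - T (fock_truncate N y) k = T (fock_tail N y) k"
      unfolding fock_tail_eq_diff
      using fock_unitary_linear[OF T y fock_truncate_in_fock, of 1 "-1"] by simp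
    also have "cmod \<dots> \<le> sqrt (fock_sqnorm (fock_tail N y))"
      using cmod_le_sqrt_fock_sqnorm[OF fock_unitary_fock[OF T tail]] fock_unitary_sqnorm[OF T tail] by simp
    finally show "cmod (T y k - T (fock_truncate N y) k) \<le> sqrt (fock_sqnorm (fock_tail N y))" .
  qed
  then show ?thesis
    by (simp add: sums_def fock_unitary_truncate[OF T])
qed

lemma fock_unitary_eqI:
  assumes S: "fock_unitary S" and T: "fock_unitary T" and "\<And>j. S (fock_basis j) = T (fock_basis j)"
  shows "S = T"
proof
  fix y
  show "S y = T y"
  proof (cases "y \<in> fock")
    case True
    show ?thesis
      using fock_unitary_expansion[OF S True] fock_unitary_expansion[OF T True] assms(3)
      by (auto intro: sums_unique2)
  next
    case False
    then show ?thesis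
      using S T unfolding fock_unitary_def by simp
  qed
qed

section \<open>Operators given by matrices\<close>

text \<open>Off the Fock space \<open>matrix_op M\<close> is 0, the convention required by \<^const>\<open>fock_unitary\<close>.\<close>

definition matrix_op :: "(nat \<Rightarrow> nat \<Rightarrow> complex) \<Rightarrow> (nat \<Rightarrow> complex) \<Rightarrow> nat \<Rightarrow> complex" where
  "matrix_op M y = (if y \<in> fock then (\<lambda>k. \<Sum>j. M k j * y j) else (\<lambda>_. 0))"

definition orthonormal_rows :: "(nat \<Rightarrow> nat \<Rightarrow> complex) \<Rightarrow> bool" where
  "orthonormal_rows M \<longleftrightarrow> (\<forall>k k'. (\<lambda>j. M k j * cnj (M k' j)) sums (if k = k' then 1 else 0))"

definition orthonormal_cols :: "(nat \<Rightarrow> nat \<Rightarrow> complex) \<Rightarrow> bool" where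
  "orthonormal_cols M \<longleftrightarrow> (\<forall>j l. (\<lambda>k. cnj (M k j) * M k l) sums (if j = l then 1 else 0))"

definition matrix_adjoint :: "(nat \<Rightarrow> nat \<Rightarrow> complex) \<Rightarrow> nat \<Rightarrow> nat \<Rightarrow> complex" where
  "matrix_adjoint M = (\<lambda>j k. cnj (M k j))"

lemma matrix_adjoint_adjoint [simp]: "matrix_adjoint (matrix_adjoint M) = M"
  by (simp add: matrix_adjoint_def)

lemma orthonormal_rows_adjoint: "orthonormal_rows (matrix_adjoint M) \<longleftrightarrow> orthonormal_cols M"
  unfolding orthonormal_rows_def orthonormal_cols_def matrix_adjoint_def by (simp add: eq_commute)

lemma orthonormal_cols_adjoint: "orthonormal_cols (matrix_adjoint M) \<longleftrightarrow> orthonormal_rows M"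
  unfolding orthonormal_rows_def orthonormal_cols_def matrix_adjoint_def
  by (simp add: mult.commute eq_commute)

lemma orthonormal_rows_fock:
  assumes "orthonormal_rows M"
  shows "M k \<in> fock" and "fock_sqnorm (M k) = 1"
proof -
  have "(\<lambda>j. M k j * cnj (M k j)) sums of_real 1"
    using assms[unfolded orthonormal_rows_def, rule_format, of k k] by simp
  then show "M k \<in> fock" and "fock_sqnorm (M k) = 1"
    by (rule fock_of_sums_mult_cnj)+
qed

lemma matrix_op_apply: "y \<in> fock \<Longrightarrow> matrix_op M y k = (\<Sum>j. M k j * y j)"
  by (simp add: matrix_op_def)

lemma cmod_matrix_op_le:
  assumes "orthonormal_rows M" "y \<in> fock"
  shows "cmod (matrix_op M y k) \<le> sqrt (fock_sqnorm y)"
  using cmod_suminf_mult_le[OF orthonormal_rows_fock(1)[OF assms(1)] assms(2), of k]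
    orthonormal_rows_fock(2)[OF assms(1), of k] assms(2)
  by (simp add: matrix_op_apply)

lemma matrix_op_sums:
  assumes "orthonormal_rows M" "y \<in> fock"
  shows "(\<lambda>j. M k j * y j) sums matrix_op M y k"
  using summable_fock_mult[OF orthonormal_rows_fock(1)[OF assms(1)] assms(2)] assms(2)
  by (simp add: matrix_op_apply summable_sums)

lemma fock_sqnorm_row_combination:
  fixes c :: "nat \<Rightarrow> complex" and K :: nat
  assumes "orthonormal_rows M"
  defines "z \<equiv> \<lambda>j. \<Sum>k<K. c k * cnj (M k j)"
  shows "z \<in> fock" and "fock_sqnorm z = (\<Sum>k<K. (cmod (c k))^2)"
proof -
  have "(\<lambda>j. \<Sum>k<K. \<Sum>k'<K. (c k * cnj (c k')) * (M k' j * cnj (M k j)))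
      sums (\<Sum>k<K. \<Sum>k'<K. (c k * cnj (c k')) * (if k' = k then 1 else 0))"
    using assms(1) unfolding orthonormal_rows_def by (intro sums_sum sums_mult) auto
  moreover have "(\<Sum>k'<K. (c k * cnj (c k')) * (if k' = k then 1 else 0)) = c k * cnj (c k)"
    if "k \<in> {..<K}" for k
    using that by (simp add: if_distrib[of "\<lambda>t. _ * t"] sum.delta cong: if_cong)
  moreover have "(\<Sum>k<K. \<Sum>k'<K. (c k * cnj (c k')) * (M k' j * cnj (M k j))) = z j * cnj (z j)" for j
    unfolding z_def cnj_sum sum_product by (intro sum.cong refl) (simp add: mult_ac)
  ultimately have "(\<lambda>j. z j * cnj (z j)) sums (\<Sum>k<K. c k * cnj (c k))"
    by simp
  also have "(\<Sum>k<K. c k * cnj (c k)) = of_real (\<Sum>k<K. (cmod (c k))^2)"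
    by (simp only: of_real_sum complex_norm_square)
  finally have "(\<lambda>j. z j * cnj (z j)) sums of_real (\<Sum>k<K. (cmod (c k))^2)" .
  then show "z \<in> fock" and "fock_sqnorm z = (\<Sum>k<K. (cmod (c k))^2)"
    by (rule fock_of_sums_mult_cnj)+
qed

lemma bessel_partial:
  assumes M: "orthonormal_rows M" and y: "y \<in> fock"
  shows "(\<Sum>k<K. (cmod (matrix_op M y k))^2) \<le> fock_sqnorm y"
proof -
  define S where "S = (\<Sum>k<K. (cmod (matrix_op M y k))^2)"
  define z where "z j = (\<Sum>k<K. matrix_op M y k * cnj (M k j))" for j
  have "S \<ge> 0"
    unfolding S_def by (intro sum_nonneg) simp
  have z: "z \<in> fock" "fock_sqnorm z = S"
    unfolding z_def S_def using fock_sqnorm_row_combination[OF M] by auto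
  have "(\<lambda>j. \<Sum>k<K. cnj (matrix_op M y k) * (M k j * y j))
      sums (\<Sum>k<K. cnj (matrix_op M y k) * matrix_op M y k)"
    by (intro sums_sum sums_mult matrix_op_sums[OF M y])
  moreover have "(\<lambda>j. \<Sum>k<K. cnj (matrix_op M y k) * (M k j * y j)) = (\<lambda>j. cnj (z j) * y j)"
    unfolding z_def cnj_sum by (simp add: sum_distrib_left sum_distrib_right mult_ac)
  moreover have "(\<Sum>k<K. cnj (matrix_op M y k) * matrix_op M y k) = of_real S"
    unfolding S_def of_real_sum by (simp only: complex_norm_square mult.commute)
  ultimately have "(\<lambda>j. cnj (z j) * y j) sums of_real S"
    by simp
  then have "S = cmod (\<Sum>j. cnj (z j) * y j)"
    using \<open>S \<ge> 0\<close> by (simp add: sums_iff)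
  also have "\<dots> \<le> sqrt (fock_sqnorm (\<lambda>j. cnj (z j))) * sqrt (fock_sqnorm y)"
    using z(1) y by (intro cmod_suminf_mult_le) (simp_all add: mem_fock_iff)
  also have "\<dots> = sqrt S * sqrt (fock_sqnorm y)"
    using z(2) by (simp add: fock_sqnorm_def)
  finally have "S^2 \<le> (sqrt S * sqrt (fock_sqnorm y))^2"
    using \<open>S \<ge> 0\<close> by (rule power_mono)
  also have "\<dots> = S * fock_sqnorm y"
    using \<open>S \<ge> 0\<close> fock_sqnorm_nonneg[OF y] by (simp add: power_mult_distrib)
  finally have "S * S \<le> S * fock_sqnorm y"
    by (simp add: power2_eq_square)
  then show ?thesis
    using \<open>S \<ge> 0\<close> fock_sqnorm_nonneg[OF y] by (cases "S = 0") (auto simp: S_def mult_le_cancel_left)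
qed

lemma matrix_op_fock:
  assumes "orthonormal_rows M" and "y \<in> fock"
  shows "matrix_op M y \<in> fock"
  unfolding mem_fock_iff
  by (rule summableI_nonneg_bounded[where x="fock_sqnorm y"]) (use bessel_partial[OF assms] in auto)

lemma fock_sqnorm_matrix_op_le:
  assumes "orthonormal_rows M" and "y \<in> fock"
  shows "fock_sqnorm (matrix_op M y) \<le> fock_sqnorm y"
  unfolding fock_sqnorm_def[of "matrix_op M y"]
  using matrix_op_fock[OF assms] bessel_partial[OF assms]
  by (intro suminf_le_const) (auto simp: mem_fock_iff)

lemma matrix_op_linear:
  assumes M: "orthonormal_rows M" and y: "y \<in> fock" and z: "z \<in> fock"
  shows "matrix_op M (\<lambda>k. a * y k + b * z k) = (\<lambda>k. a * matrix_op M y k + b * matrix_op M z k)"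
proof
  fix k
  have "(\<lambda>j. a * (M k j * y j) + b * (M k j * z j)) sums (a * matrix_op M y k + b * matrix_op M z k)"
    by (intro sums_add sums_mult matrix_op_sums[OF M y] matrix_op_sums[OF M z])
  then show "matrix_op M (\<lambda>k. a * y k + b * z k) k = a * matrix_op M y k + b * matrix_op M z k"
    using fock_lin[OF y z, of a b] by (simp add: matrix_op_apply sums_iff algebra_simps)
qed

lemma matrix_op_diff:
  assumes "orthonormal_rows M" and "y \<in> fock" and "z \<in> fock"
  shows "matrix_op M (\<lambda>k. y k - z k) = (\<lambda>k. matrix_op M y k - matrix_op M z k)"
  using matrix_op_linear[OF assms, of 1 "-1"] by simp

lemma matrix_op_truncate: "matrix_op M (fock_truncate N y) k = (\<Sum>j<N. M k j * y j)"
proof -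
  have "(\<lambda>j. M k j * fock_truncate N y j) sums (\<Sum>j<N. M k j * fock_truncate N y j)"
    by (rule sums_finite) (auto simp: fock_truncate_def)
  then show ?thesis
    using fock_truncate_in_fock by (simp add: matrix_op_apply sums_iff fock_truncate_def)
qed

lemma matrix_adjoint_op_truncate:
  assumes M: "orthonormal_rows M" and C: "orthonormal_cols M" and "i < N"
  shows "matrix_op (matrix_adjoint M) (matrix_op M (fock_truncate N y)) i = y i"
proof -
  have "(\<lambda>k. \<Sum>j<N. (cnj (M k i) * M k j) * y j) sums (\<Sum>j<N. (if i = j then 1 else 0) * y j)"
    using C unfolding orthonormal_cols_def by (intro sums_sum sums_mult2) auto
  moreover have "(\<Sum>j<N. (if i = j then 1 else 0) * y j) = y i"
    using \<open>i < N\<close> by (simp add: if_distrib[of "\<lambda>t. t * _"] sum.delta cong: if_cong)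
  ultimately have "(\<lambda>k. matrix_adjoint M i k * matrix_op M (fock_truncate N y) k) sums y i"
    by (simp add: matrix_op_truncate matrix_adjoint_def sum_distrib_left mult_ac)
  moreover have "matrix_op M (fock_truncate N y) \<in> fock"
    by (rule matrix_op_fock[OF M fock_truncate_in_fock])
  ultimately show ?thesis
    by (simp add: matrix_op_apply sums_iff)
qed

lemma matrix_adjoint_op_inverse:
  assumes M: "orthonormal_rows M" and C: "orthonormal_cols M" and y: "y \<in> fock"
  shows "matrix_op (matrix_adjoint M) (matrix_op M y) = y"
proof
  fix i
  define f where "f z = matrix_op (matrix_adjoint M) (matrix_op M z) i" for z
  have MA: "orthonormal_rows (matrix_adjoint M)"
    using C by (simp add: orthonormal_rows_adjoint)
  have "(\<lambda>N. f (fock_truncate N y)) \<longlonglongrightarrow> f y"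
  proof (rule tendsto_truncate[OF y])
    fix N
    have tail: "fock_tail N y \<in> fock"
      by (rule fock_tail_in_fock[OF y])
    have "f y - f (fock_truncate N y) = f (fock_tail N y)"
      unfolding f_def fock_tail_eq_diff
      by (simp add: matrix_op_diff[OF M y fock_truncate_in_fock]
          matrix_op_diff[OF MA matrix_op_fock[OF M y] matrix_op_fock[OF M fock_truncate_in_fock]])
    also have "cmod \<dots> \<le> sqrt (fock_sqnorm (matrix_op M (fock_tail N y)))"
      unfolding f_def by (rule cmod_matrix_op_le[OF MA matrix_op_fock[OF M tail]])
    also have "\<dots> \<le> sqrt (fock_sqnorm (fock_tail N y))"
      using fock_sqnorm_matrix_op_le[OF M tail] by simp
    finally show "cmod (f y - f (fock_truncate N y)) \<le> sqrt (fock_sqnorm (fock_tail N y))" .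
  qed
  moreover have "\<forall>\<^sub>F N in sequentially. f (fock_truncate N y) = y i"
    using eventually_gt_at_top[of i] by eventually_elim (simp add: f_def matrix_adjoint_op_truncate[OF M C])
  then have "(\<lambda>N. f (fock_truncate N y)) \<longlonglongrightarrow> y i"
    by (rule tendsto_eventually)
  ultimately show "matrix_op (matrix_adjoint M) (matrix_op M y) i = y i"
    unfolding f_def by (rule LIMSEQ_unique)
qed

lemma fock_sqnorm_matrix_op:
  assumes M: "orthonormal_rows M" and C: "orthonormal_cols M" and y: "y \<in> fock"
  shows "fock_sqnorm (matrix_op M y) = fock_sqnorm y"
proof -
  have MA: "orthonormal_rows (matrix_adjoint M)"
    using C by (simp add: orthonormal_rows_adjoint)
  have "fock_sqnorm y = fock_sqnorm (matrix_op (matrix_adjoint M) (matrix_op M y))"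
    by (simp add: matrix_adjoint_op_inverse[OF M C y])
  also have "\<dots> \<le> fock_sqnorm (matrix_op M y)"
    by (rule fock_sqnorm_matrix_op_le[OF MA matrix_op_fock[OF M y]])
  finally show ?thesis
    using fock_sqnorm_matrix_op_le[OF M y] by simp
qed

lemma fock_inner_matrix_op:
  assumes M: "orthonormal_rows M" and C: "orthonormal_cols M" and y: "y \<in> fock" and z: "z \<in> fock"
  shows "fock_inner (matrix_op M y) (matrix_op M z) = fock_inner y z"
proof -
  note My = matrix_op_fock[OF M y]
  have Re: "Re (fock_inner (matrix_op M y) (matrix_op M w)) = Re (fock_inner y w)" if w: "w \<in> fock" for w
  proof -
    have "fock_sqnorm (\<lambda>k. y k + w k) = fock_sqnorm (\<lambda>k. matrix_op M y k + matrix_op M w k)"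
      using fock_sqnorm_matrix_op[OF M C fock_add[OF y w]] matrix_op_linear[OF M y w, of 1 1] by simp
    then show ?thesis
      using fock_sqnorm_add[OF y w] fock_sqnorm_add[OF My matrix_op_fock[OF M w]]
        fock_sqnorm_matrix_op[OF M C y] fock_sqnorm_matrix_op[OF M C w] by simp
  qed
  have "Re (\<i> * fock_inner (matrix_op M y) (matrix_op M z)) = Re (\<i> * fock_inner y z)"
    using Re[OF fock_scale[OF z, of \<i>]] matrix_op_linear[OF M z z, of \<i> 0]
    by (simp add: fock_inner_scale[OF My matrix_op_fock[OF M z]] fock_inner_scale[OF y z])
  then show ?thesis
    using Re[OF z] by (simp add: complex_eq_iff)
qed

lemma matrix_op_unitary:
  assumes M: "orthonormal_rows M" and C: "orthonormal_cols M"
  shows "fock_unitary (matrix_op M)"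
  unfolding fock_unitary_def
proof (intro conjI ballI allI impI)
  show "matrix_op M x = (\<lambda>_. 0)" if "x \<notin> fock" for x
    using that by (simp add: matrix_op_def)
  have MA: "orthonormal_rows (matrix_adjoint M)" and CA: "orthonormal_cols (matrix_adjoint M)"
    using M C by (simp_all add: orthonormal_rows_adjoint orthonormal_cols_adjoint)
  have "z = matrix_op M (matrix_op (matrix_adjoint M) z)" if "z \<in> fock" for z
    using matrix_adjoint_op_inverse[OF MA CA that] by simp
  then show "matrix_op M ` fock = fock"
    using matrix_op_fock[OF M] matrix_op_fock[OF MA] by blast
  show "matrix_op M (\<lambda>k. a * x k + b * y k) = (\<lambda>k. a * matrix_op M x k + b * matrix_op M y k)"
    if "x \<in> fock" "y \<in> fock" for x y a b
    by (rule matrix_op_linear[OF M that])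
  show "fock_inner (matrix_op M x) (matrix_op M y) = fock_inner x y" if "x \<in> fock" "y \<in> fock" for x y
    by (rule fock_inner_matrix_op[OF M C that])
qed

section \<open>The matrix of the Weyl operator\<close>

lemma powser_sums_zero_imp_coeff_zero:
  fixes b :: "nat \<Rightarrow> 'a::{real_normed_field,banach}"
  assumes "\<And>v. (\<lambda>n. b n * v^n) sums 0"
  shows "b n = 0"
proof (induction n rule: less_induct)
  case (less n)
  have sm: "(\<lambda>m. b (m+n) * v^m) sums 0" if "v \<noteq> 0" for v
  proof -
    have z: "(\<Sum>i<n. b i * v^i) = 0" using less by simp
    have "(\<lambda>m. b (m+n) * v^(m+n)) sums 0"
      using assms[of v] sums_iff_shift[of "\<lambda>i. b i * v^i" n 0] z by simp
    then have "(\<lambda>m. b (m+n) * v^(m+n) * (1 / v^n)) sums (0 * (1/v^n))"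
      by (intro sums_mult2) simp
    moreover have "b (m+n) * v^(m+n) * (1 / v^n) = b (m+n) * v^m" for m
      using that by (simp add: power_add field_simps)
    ultimately show ?thesis by simp
  qed
  have "((\<lambda>_::'a. 0::'a) \<longlongrightarrow> b (0+n)) (at 0)"
    by (rule powser_limit_0_strong[where s=1]) (use sm in auto)
  then show ?case
    using tendsto_const_iff[of "at (0::'a)" "0::'a" "b n"] by simp
qed

lemma norm_expvec: "norm (expvec v l) = norm v ^ l / sqrt (fact l)"
  by (simp add: expvec_def norm_divide norm_power)

lemma expvec_in_fock: "expvec v \<in> fock"
proof -
  have "(cmod (expvec v n))^2 = inverse (fact n) * ((cmod v)^2)^n" for n
    by (simp add: norm_expvec power_divide power_mult[symmetric] power_mult_distrib field_simps)
  then show ?thesis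
    using summable_exp[of "(cmod v)^2"] unfolding mem_fock_iff by simp
qed

lemma expvec_coeffs_zero:
  assumes "\<And>v. (\<lambda>l. c l * expvec v l) sums 0"
  shows "c l = 0"
proof -
  have "(\<lambda>l. c l / of_real (sqrt (fact l)) * v^l) sums 0" for v
    using assms[of v] by (simp add: expvec_def)
  then have "c l / of_real (sqrt (fact l)) = 0"
    by (rule powser_sums_zero_imp_coeff_zero)
  then show ?thesis
    by simp
qed

definition poly_exp_coeff :: "'a::{real_normed_field,banach} \<Rightarrow> 'a \<Rightarrow> nat \<Rightarrow> nat \<Rightarrow> 'a" where
  "poly_exp_coeff \<alpha> \<beta> k j = (\<Sum>m\<le>j. (if m \<le> k then \<alpha>^(k-m) / (fact m * fact (k-m)) else 0) * (\<beta>^(j-m) / fact (j-m)))"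

lemma poly_exp_coeff_sums:
  fixes \<alpha> \<beta> v :: "'a::{real_normed_field,banach}"
  shows "(\<lambda>j. poly_exp_coeff \<alpha> \<beta> k j * v^j) sums ((\<alpha>+v)^k / fact k * exp (\<beta> * v))"
proof -
  define f where "f m = (if m \<le> k then \<alpha>^(k-m) / (fact m * fact (k-m)) * v^m else 0)" for m
  define g where "g i = (\<beta> * v)^i /\<^sub>R fact i" for i
  have sf: "f sums (\<Sum>m\<le>k. f m)"
    by (rule sums_finite) (auto simp: f_def)
  have snf: "summable (\<lambda>m. norm (f m))"
    by (rule summable_finite[of "{..k}"]) (auto simp: f_def)
  have sng: "summable (\<lambda>i. norm (g i))"
    unfolding g_def by (rule summable_norm_exp)
  have sg: "g sums exp (\<beta> * v)" unfolding g_def by (rule exp_converges)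
  have "(\<Sum>m\<le>k. f m) = (\<Sum>m\<le>k. of_nat (k choose m) * v^m * \<alpha>^(k-m)) / fact k"
    by (auto simp: f_def sum_divide_distrib binomial_fact intro!: sum.cong)
  also have "\<dots> = (v+\<alpha>)^k / fact k"
    by (simp only: binomial_ring[of v \<alpha> k])
  also have "\<dots> = (\<alpha>+v)^k / fact k"
    by (simp add: add.commute)
  finally have fsum: "(\<Sum>m\<le>k. f m) = (\<alpha>+v)^k / fact k" .
  have "(\<lambda>j. \<Sum>i\<le>j. f i * g (j - i)) sums ((\<Sum>m. f m) * (\<Sum>i. g i))"
    by (rule Cauchy_product_sums[OF snf sng])
  moreover have "(\<Sum>m. f m) = (\<alpha>+v)^k / fact k" using sf fsum sums_unique by metis
  moreover have "(\<Sum>i. g i) = exp (\<beta> * v)" using sg sums_unique by metis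
  moreover have "(\<Sum>i\<le>j. f i * g (j - i)) = poly_exp_coeff \<alpha> \<beta> k j * v^j" for j
    unfolding poly_exp_coeff_def sum_distrib_right
  proof (intro sum.cong refl)
    fix i assume "i \<in> {..j}"
    then have ij: "i \<le> j" by simp
    have vv: "v^i * v^(j-i) = v^j" using ij by (simp add: power_add[symmetric])
    show "f i * g (j - i) = (if i \<le> k then \<alpha>^(k-i) / (fact i * fact (k-i)) else 0) * (\<beta>^(j-i) / fact (j-i)) * v^j"
      by (auto simp: f_def g_def scaleR_conv_of_real power_mult_distrib divide_inverse vv[symmetric] mult_ac)
  qed
  ultimately show ?thesis by simp
qed

lemma poly_exp_coeff_eq:
  "poly_exp_coeff \<alpha> \<beta> k j = (\<Sum>m\<le>min j k. \<alpha>^(k-m) * \<beta>^(j-m) / (fact m * fact (k-m) * fact (j-m)))"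
proof -
  have "poly_exp_coeff \<alpha> \<beta> k j = (\<Sum>m\<in>{..j}. if m \<le> k then \<alpha>^(k-m) * \<beta>^(j-m) / (fact m * fact (k-m) * fact (j-m)) else 0)"
    unfolding poly_exp_coeff_def by (intro sum.cong) auto
  also have "\<dots> = (\<Sum>m\<in>{..j} \<inter> {m. m \<le> k}. \<alpha>^(k-m) * \<beta>^(j-m) / (fact m * fact (k-m) * fact (j-m)))"
    by (simp add: sum.inter_restrict)
  also have "{..j} \<inter> {m. m \<le> k} = {..min j k}" by auto
  finally show ?thesis .
qed

lemma norm_poly_exp_coeff_le:
  fixes \<alpha> \<beta> :: "'a::{real_normed_field,banach}"
  shows "norm (poly_exp_coeff \<alpha> \<beta> k j) \<le> poly_exp_coeff (norm \<alpha>) (norm \<beta>) k j"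
proof -
  have "norm (poly_exp_coeff \<alpha> \<beta> k j) \<le> (\<Sum>m\<le>min j k. norm (\<alpha>^(k-m) * \<beta>^(j-m) / (fact m * fact (k-m) * fact (j-m))))"
    unfolding poly_exp_coeff_eq by (rule norm_sum)
  also have "\<dots> = poly_exp_coeff (norm \<alpha>) (norm \<beta>) k j"
    unfolding poly_exp_coeff_eq by (intro sum.cong refl) (simp add: norm_mult norm_divide norm_power)
  finally show ?thesis .
qed

lemma poly_exp_coeff_nonneg:
  fixes a b :: real
  assumes "a \<ge> 0" "b \<ge> 0"
  shows "poly_exp_coeff a b k j \<ge> 0"
  unfolding poly_exp_coeff_eq using assms by (intro sum_nonneg) auto

text \<open>The k-th component of \<open>W(u)|e(v)>\<close> is \<open>exp(-|u|^2/2) (u + v)^k / sqrt(k!) exp(-cnj u v)\<close>;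
  its coefficient of \<open>v^j / sqrt(j!)\<close> is the entry \<open><k|W(u)|j>\<close>.\<close>

definition weyl_matrix :: "complex \<Rightarrow> nat \<Rightarrow> nat \<Rightarrow> complex" where
  "weyl_matrix u k j = of_real (exp (- ((cmod u)^2/2))) * of_real (sqrt (fact j) * sqrt (fact k))
     * poly_exp_coeff u (- cnj u) k j"

lemma weyl_matrix_expvec_sums:
  "(\<lambda>j. weyl_matrix u k j * expvec v j) sums (exp (- of_real ((cmod u)^2/2) - cnj u * v) * expvec (u+v) k)"
proof -
  define c :: complex where "c = of_real (exp (- ((cmod u)^2/2))) * of_real (sqrt (fact k))"
  have "(\<lambda>j. poly_exp_coeff u (- cnj u) k j * v^j) sums ((u+v)^k / fact k * exp ((- cnj u) * v))"
    by (rule poly_exp_coeff_sums)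
  then have "(\<lambda>j. c * (poly_exp_coeff u (- cnj u) k j * v^j)) sums (c * ((u+v)^k / fact k * exp ((- cnj u) * v)))"
    by (rule sums_mult)
  moreover have "weyl_matrix u k j * expvec v j = c * (poly_exp_coeff u (- cnj u) k j * v^j)" for j
  proof -
    have "sqrt (fact j :: real) \<noteq> 0" by simp
    then have "(of_real (sqrt (fact j)) :: complex) \<noteq> 0" by simp
    then show ?thesis
      unfolding weyl_matrix_def expvec_def c_def by (simp add: field_simps)
  qed
  moreover have "c * ((u+v)^k / fact k * exp ((- cnj u) * v)) =
      exp (- of_real ((cmod u)^2/2) - cnj u * v) * expvec (u+v) k"
  proof -
    have nz: "(of_real (sqrt (fact k)) :: complex) \<noteq> 0" by simp
    have fk: "(fact k :: complex) = of_real (sqrt (fact k)) * of_real (sqrt (fact k))"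
      by (simp flip: of_real_mult)
    have ee: "exp (- of_real ((cmod u)^2/2) - cnj u * v) = of_real (exp (- ((cmod u)^2/2))) * exp ((- cnj u) * v)"
      by (simp add: exp_add[symmetric] exp_of_real[symmetric])
    show ?thesis
      unfolding c_def expvec_def ee using nz
      by (simp add: fk field_simps)
  qed
  ultimately show ?thesis by simp
qed

lemma cnj_weyl_matrix: "cnj (weyl_matrix u k j) = weyl_matrix (-u) j k"
proof -
  have "cnj (poly_exp_coeff u (- cnj u) k j) = poly_exp_coeff (-u) (- cnj (-u)) j k"
    unfolding poly_exp_coeff_eq
    by (simp add: min.commute mult_ac)
  then show ?thesis
    unfolding weyl_matrix_def by (simp add: mult_ac)
qed

lemma norm_weyl_matrix_le:
  "norm (weyl_matrix u k j)
     \<le> exp (- ((cmod u)^2/2)) * (sqrt (fact j) * sqrt (fact k)) * poly_exp_coeff (cmod u) (cmod u) k j"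
proof -
  have "norm (weyl_matrix u k j)
      = exp (- ((cmod u)^2/2)) * (sqrt (fact j) * sqrt (fact k)) * norm (poly_exp_coeff u (- cnj u) k j)"
    unfolding weyl_matrix_def by (simp add: norm_mult)
  then show ?thesis
    using norm_poly_exp_coeff_le[of u "- cnj u" k j] by (simp add: mult_left_mono)
qed

lemma poly_exp_coeff_majorant_summable:
  fixes a r :: real
  assumes "a \<ge> 0" and "r \<ge> 0"
  shows "(\<lambda>(k, l). fact k * poly_exp_coeff a a j k * poly_exp_coeff a a k l * r^l) summable_on UNIV"
proof -
  define B where "B = (\<lambda>(k, l). fact k * poly_exp_coeff a a j k * poly_exp_coeff a a k l * r^l)"
  define g where "g k = exp (a * r) * poly_exp_coeff a a j k * (a + r)^k" for k
  have B_nonneg: "B (k, l) \<ge> 0" for k l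
    unfolding B_def using assms by (auto intro!: mult_nonneg_nonneg poly_exp_coeff_nonneg)
  have "((\<lambda>l. B (k, l)) has_sum g k) UNIV" for k
  proof (rule sums_nonneg_imp_has_sum)
    show "(\<lambda>l. B (k, l)) sums g k"
      using sums_mult[OF poly_exp_coeff_sums[of a a k r], of "fact k * poly_exp_coeff a a j k"]
      unfolding B_def g_def by (simp add: field_simps)
  qed (rule B_nonneg)
  moreover have "g summable_on UNIV"
  proof (rule summable_nonneg_imp_summable_on)
    show "summable g"
      using summable_mult[OF sums_summable[OF poly_exp_coeff_sums[of a a j "a + r"]], of "exp (a * r)"]
      unfolding g_def by (simp add: mult_ac)
    show "g k \<ge> 0" for k
      unfolding g_def using assms by (auto intro!: mult_nonneg_nonneg poly_exp_coeff_nonneg)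
  qed
  ultimately show ?thesis
    using summable_on_SigmaI[where g=g and A=UNIV and B="\<lambda>_. UNIV" and f=B] B_nonneg
    by (auto simp: B_def)
qed

lemma weyl_matrix_product_summable:
  "(\<lambda>(k, l). weyl_matrix (-u) j k * weyl_matrix u k l * expvec v l) summable_on UNIV"
proof -
  define a r where "a = cmod u" and "r = cmod v"
  have "a \<ge> 0" "r \<ge> 0"
    by (simp_all add: a_def r_def)
  define B where "B = (\<lambda>(k, l). exp (- (a^2)) * sqrt (fact j)
      * (fact k * poly_exp_coeff a a j k * poly_exp_coeff a a k l * r^l))"
  have B_nonneg: "B (k, l) \<ge> 0" for k l
    unfolding B_def using \<open>a \<ge> 0\<close> \<open>r \<ge> 0\<close> by (auto intro!: mult_nonneg_nonneg poly_exp_coeff_nonneg)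
  have bound: "norm (weyl_matrix (-u) j k * weyl_matrix u k l * expvec v l) \<le> B (k, l)" for k l
  proof -
    have "norm (weyl_matrix (-u) j k * weyl_matrix u k l * expvec v l)
        \<le> (exp (- (a^2/2)) * (sqrt (fact k) * sqrt (fact j)) * poly_exp_coeff a a j k)
          * (exp (- (a^2/2)) * (sqrt (fact l) * sqrt (fact k)) * poly_exp_coeff a a k l) * (r^l / sqrt (fact l))"
      unfolding norm_mult norm_expvec
      using norm_weyl_matrix_le[of "-u" j k] norm_weyl_matrix_le[of u k l] \<open>a \<ge> 0\<close> \<open>r \<ge> 0\<close>
      by (intro mult_mono mult_nonneg_nonneg poly_exp_coeff_nonneg) (auto simp: a_def r_def)
    also have "\<dots> = B (k, l)"
      unfolding B_def by (simp add: field_simps flip: exp_add)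
    finally show ?thesis .
  qed
  have "B summable_on UNIV"
    using summable_on_cmult_right[OF poly_exp_coeff_majorant_summable[OF \<open>a \<ge> 0\<close> \<open>r \<ge> 0\<close>, of j],
        of "exp (- (a^2)) * sqrt (fact j)"]
    by (simp add: B_def case_prod_unfold)
  then have "(\<lambda>x. norm (B x)) summable_on UNIV"
    using B_nonneg by (subst summable_on_cong[where g=B]) auto
  then have "(\<lambda>x. norm ((\<lambda>(k, l). weyl_matrix (-u) j k * weyl_matrix u k l * expvec v l) x)) summable_on UNIV"
    by (rule Infinite_Sum.abs_summable_on_comparison_test) (use bound B_nonneg in auto)
  then show ?thesis
    by (rule abs_summable_summable)
qed

lemma weyl_matrix_expvec_inverse_sums:
  "(\<lambda>k. weyl_matrix (-u) j k * (exp (- of_real ((cmod u)^2/2) - cnj u * v) * expvec (u + v) k))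
     sums expvec v j"
proof -
  define E1 E2 where "E1 = exp (- of_real ((cmod u)^2/2) - cnj u * v)"
    and "E2 = exp (- of_real ((cmod (-u))^2/2) - cnj (-u) * (u + v))"
  have "cnj u * u = of_real ((cmod u)^2)"
    by (simp only: complex_norm_square mult.commute)
  then have "(- of_real ((cmod u)^2/2) - cnj u * v) + (- of_real ((cmod (-u))^2/2) - cnj (-u) * (u + v)) = 0"
    by (simp add: algebra_simps)
  then have "E1 * E2 = 1"
    unfolding E1_def E2_def by (metis exp_add exp_zero)
  moreover have "(\<lambda>k. E1 * (weyl_matrix (-u) j k * expvec (u + v) k)) sums (E1 * (E2 * expvec (-u + (u + v)) j))"
    unfolding E2_def by (intro sums_mult weyl_matrix_expvec_sums)
  ultimately have "(\<lambda>k. E1 * (weyl_matrix (-u) j k * expvec (u + v) k)) sums expvec v j"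
    by (simp add: mult.assoc[symmetric])
  then show ?thesis
    by (simp add: E1_def mult_ac)
qed

lemma weyl_matrix_product_expvec_sums:
  "(\<lambda>l. infsum (\<lambda>k. weyl_matrix (-u) j k * weyl_matrix u k l) UNIV * expvec v l) sums expvec v j"
proof -
  define F where "F k = (\<lambda>l. weyl_matrix (-u) j k * weyl_matrix u k l * expvec v l)" for k
  have F: "(\<lambda>(k, l). F k l) summable_on UNIV \<times> UNIV"
    using weyl_matrix_product_summable[of u j v] by (simp add: F_def)
  have F': "(\<lambda>(l, k). F k l) summable_on UNIV \<times> UNIV"
    using summable_on_swap[of "\<lambda>(k, l). F k l" UNIV UNIV] F by (simp add: case_prod_unfold)
  have "infsum (F k) UNIV = weyl_matrix (-u) j k * (exp (- of_real ((cmod u)^2/2) - cnj u * v) * expvec (u + v) k)"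
    for k
  proof -
    have "F k sums (weyl_matrix (-u) j k * (exp (- of_real ((cmod u)^2/2) - cnj u * v) * expvec (u + v) k))"
      using sums_mult[OF weyl_matrix_expvec_sums[of u k v], of "weyl_matrix (-u) j k"]
      by (simp add: F_def mult.assoc)
    moreover have "F k sums infsum (F k) UNIV"
      using summable_on_SigmaD1[OF F, of k] by (intro has_sum_imp_sums has_sum_infsum) simp
    ultimately show ?thesis
      using sums_unique2 by blast
  qed
  moreover have "(\<lambda>k. infsum (F k) UNIV) sums infsum (\<lambda>k. infsum (F k) UNIV) UNIV"
    using summable_on_Sigma_banach[OF F] by (intro has_sum_imp_sums has_sum_infsum) simp
  ultimately have "infsum (\<lambda>k. infsum (F k) UNIV) UNIV = expvec v j"
    using weyl_matrix_expvec_inverse_sums[of u j v] sums_unique2 by force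
  also have "infsum (\<lambda>k. infsum (F k) UNIV) UNIV = infsum (\<lambda>l. infsum (\<lambda>k. F k l) UNIV) UNIV"
    using infsum_swap_banach[OF F] by simp
  finally have "(\<lambda>l. infsum (\<lambda>k. F k l) UNIV) sums expvec v j"
    using summable_on_Sigma_banach[OF F'] by (metis has_sum_imp_sums has_sum_infsum)
  moreover have "infsum (\<lambda>k. F k l) UNIV = infsum (\<lambda>k. weyl_matrix (-u) j k * weyl_matrix u k l) UNIV * expvec v l"
    for l
    unfolding F_def by (rule infsum_cmult_left')
  ultimately show ?thesis
    by simp
qed

lemma weyl_matrix_inverse_sums:
  "(\<lambda>k. weyl_matrix (-u) j k * weyl_matrix u k l) sums (if l = j then 1 else 0)"
proof -
  define c where "c l = infsum (\<lambda>k. weyl_matrix (-u) j k * weyl_matrix u k l) UNIV" for l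
  have "(\<lambda>l. (c l - (if l = j then 1 else 0)) * expvec v l) sums (expvec v j - expvec v j)" for v
    using sums_diff[OF weyl_matrix_product_expvec_sums[of u j v, folded c_def] sums_single[of j "expvec v"]]
    by (simp add: left_diff_distrib if_distrib[of "\<lambda>t. t * _"] cong: if_cong)
  then have "c l - (if l = j then 1 else 0) = 0"
    by (intro expvec_coeffs_zero) simp
  moreover have "(\<lambda>k. weyl_matrix (-u) j k * weyl_matrix u k l) summable_on UNIV"
  proof -
    define F where "F k l = weyl_matrix (-u) j k * weyl_matrix u k l * expvec 1 l" for k l
    have "(\<lambda>(k, l). F k l) summable_on UNIV \<times> UNIV"
      using weyl_matrix_product_summable[of u j 1] by (simp add: F_def)
    then have "(\<lambda>(l, k). F k l) summable_on UNIV \<times> UNIV"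
      using summable_on_swap[of "\<lambda>(k, l). F k l" UNIV UNIV] by (simp add: case_prod_unfold)
    then have "(\<lambda>k. weyl_matrix (-u) j k * weyl_matrix u k l * expvec 1 l) summable_on UNIV"
      using summable_on_SigmaD1[OF _ UNIV_I, of "\<lambda>l k. F k l" "\<lambda>_. UNIV" l] by (simp add: F_def)
    moreover have "expvec 1 l \<noteq> 0"
      by (simp add: expvec_def)
    ultimately show ?thesis
      using summable_on_cmult_left' by blast
  qed
  then have "(\<lambda>k. weyl_matrix (-u) j k * weyl_matrix u k l) sums c l"
    unfolding c_def by (intro has_sum_imp_sums has_sum_infsum)
  ultimately show ?thesis
    by simp
qed

lemma orthonormal_rows_weyl_matrix: "orthonormal_rows (weyl_matrix u)"
  unfolding orthonormal_rows_def
  using weyl_matrix_inverse_sums[of "-u"] by (simp add: cnj_weyl_matrix eq_commute)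

lemma orthonormal_cols_weyl_matrix: "orthonormal_cols (weyl_matrix u)"
  unfolding orthonormal_cols_def
  using weyl_matrix_inverse_sums[of u] by (simp add: cnj_weyl_matrix eq_commute)

lemma is_weyl_matrix_op: "is_weyl u (matrix_op (weyl_matrix u))"
  unfolding is_weyl_def
proof (intro conjI allI ext)
  show "fock_unitary (matrix_op (weyl_matrix u))"
    by (rule matrix_op_unitary[OF orthonormal_rows_weyl_matrix orthonormal_cols_weyl_matrix])
  show "matrix_op (weyl_matrix u) (expvec v) k
      = exp (- complex_of_real ((cmod u)\<^sup>2 / 2) - cnj u * v) * expvec (u + v) k" for v k
    using weyl_matrix_expvec_sums[of u k v] expvec_in_fock[of v] by (simp add: matrix_op_apply sums_iff)
qed

lemma is_weyl_unique:
  assumes "is_weyl u S" and "is_weyl u T"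
  shows "S = T"
proof -
  have S: "fock_unitary S" and T: "fock_unitary T"
    using assms by (simp_all add: is_weyl_def)
  have "S (fock_basis j) k = T (fock_basis j) k" for j k
  proof -
    have "(\<lambda>j. expvec v j * S (fock_basis j) k - expvec v j * T (fock_basis j) k)
        sums (S (expvec v) k - T (expvec v) k)" for v
      by (intro sums_diff fock_unitary_expansion S T expvec_in_fock)
    moreover have "S (expvec v) = T (expvec v)" for v
      using assms by (simp add: is_weyl_def)
    ultimately have "(\<lambda>j. (S (fock_basis j) k - T (fock_basis j) k) * expvec v j) sums 0" for v
      by (simp add: algebra_simps)
    then show ?thesis
      using expvec_coeffs_zero[of "\<lambda>j. S (fock_basis j) k - T (fock_basis j) k"] by simp
  qed
  then show ?thesis
    by (intro fock_unitary_eqI[OF S T] ext)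
qed

lemma weyl_eq_matrix_op: "weyl u = matrix_op (weyl_matrix u)"
  unfolding weyl_def using is_weyl_matrix_op is_weyl_unique by blast

lemma weyl_elem_eq_weyl_matrix: "weyl_elem u k j = weyl_matrix u k j"
proof -
  have single: "(\<lambda>i. f i * fock_basis j i) sums f j" for f :: "nat \<Rightarrow> complex" and j
    using sums_single[of j f] by (simp add: fock_basis_def if_distrib[of "\<lambda>t. _ * t"] cong: if_cong)
  have "weyl u (fock_basis j) k = weyl_matrix u k j"
    using single[of "weyl_matrix u k" j] fock_basis_in_fock[of j]
    by (simp add: weyl_eq_matrix_op matrix_op_apply sums_iff)
  moreover have "fock_inner (fock_basis k) y = y k" for y
  proof -
    have "(\<lambda>i. cnj (fock_basis k i) * y i) = (\<lambda>i. y i * fock_basis k i)"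
      by (auto simp: fock_basis_def)
    then show ?thesis
      using single[of y k] unfolding fock_inner_def by (simp add: sums_iff)
  qed
  ultimately show ?thesis
    by (simp add: weyl_elem_def)
qed

section \<open>Laguerre polynomials\<close>

definition laguerre :: "nat \<Rightarrow> real \<Rightarrow> real" where
  "laguerre n x = (\<Sum>i\<le>n. real (n choose i) * (-x)^i / fact i)"

definition laguerre1 :: "nat \<Rightarrow> real \<Rightarrow> real" where
  "laguerre1 n x = (\<Sum>i\<le>n. real (Suc n choose Suc i) * (-x)^i / fact i)"

lemma laguerre_0 [simp]: "laguerre 0 x = 1"
  by (simp add: laguerre_def)

lemma laguerre1_0 [simp]: "laguerre1 0 x = 1"
  by (simp add: laguerre1_def)

lemma laguerre_at_0 [simp]: "laguerre n 0 = 1"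
proof -
  have "laguerre n 0 = (\<Sum>i\<le>n. if i = 0 then 1 else 0)"
    unfolding laguerre_def by (intro sum.cong refl) auto
  then show ?thesis by simp
qed

lemma laguerre_recurrence:
  "real (Suc n) * (laguerre (Suc n) x - laguerre n x) = - x * laguerre1 n x"
proof -
  define t where "t i = (-x)^i / fact i" for i
  have t_Suc: "real (Suc i) * t (Suc i) = - x * t i" for i
    by (simp add: t_def field_simps del: of_nat_Suc)
  have t_0: "t 0 = 1"
    by (simp add: t_def)
  have L: "laguerre m x = (\<Sum>i\<le>m. real (m choose i) * t i)" for m
    by (simp add: laguerre_def t_def)
  have "laguerre (Suc n) x = 1 + (\<Sum>i\<le>n. real (n choose i) * t (Suc i))
      + (\<Sum>i\<le>n. real (n choose Suc i) * t (Suc i))"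
    unfolding L sum.atMost_Suc_shift by (simp add: sum.distrib distrib_right t_0)
  moreover have "laguerre n x = 1 + (\<Sum>i\<le>n. real (n choose Suc i) * t (Suc i))"
  proof -
    have "laguerre n x = (\<Sum>i\<le>Suc n. real (n choose i) * t i)"
      unfolding L by simp
    then show ?thesis
      unfolding sum.atMost_Suc_shift by (simp add: t_0)
  qed
  ultimately have "real (Suc n) * (laguerre (Suc n) x - laguerre n x)
      = (\<Sum>i\<le>n. real (n choose i) * (real (Suc n) * t (Suc i)))"
    by (simp add: sum_distrib_left mult_ac)
  also have "\<dots> = (\<Sum>i\<le>n. - x * (real (Suc n choose Suc i) * t i))"
  proof (intro sum.cong refl)
    fix i
    have "real (Suc n) * real (n choose i) = real (Suc n choose Suc i) * real (Suc i)"
      by (metis Suc_times_binomial_eq of_nat_mult)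
    then show "real (n choose i) * (real (Suc n) * t (Suc i)) = - x * (real (Suc n choose Suc i) * t i)"
      by (metis (no_types, opaque_lifting) t_Suc mult.assoc mult.left_commute)
  qed
  also have "\<dots> = - x * laguerre1 n x"
    unfolding laguerre1_def sum_distrib_left t_def by (simp add: mult_ac)
  finally show ?thesis .
qed

lemma laguerre1_Suc: "laguerre1 (Suc n) x = laguerre1 n x + laguerre (Suc n) x"
proof -
  define t where "t i = (-x)^i / fact i" for i
  have L1: "laguerre1 m x = (\<Sum>i\<le>m. real (Suc m choose Suc i) * t i)" for m
    by (simp add: laguerre1_def t_def)
  have "laguerre1 (Suc n) x = (\<Sum>i\<le>Suc n. real (Suc n choose Suc i) * t i)
      + (\<Sum>i\<le>Suc n. real (Suc n choose i) * t i)"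
    unfolding L1 by (simp add: distrib_right sum.distrib)
  also have "(\<Sum>i\<le>Suc n. real (Suc n choose Suc i) * t i) = laguerre1 n x"
    unfolding L1 sum.atMost_Suc by (simp add: binomial_eq_0 del: binomial_Suc_Suc)
  finally show ?thesis
    by (simp add: laguerre_def t_def)
qed

lemma laguerre_Suc:
  "laguerre (Suc n) x = laguerre n x - x * laguerre1 n x / real (Suc n)"
  using laguerre_recurrence[of n x] by (simp add: field_simps del: of_nat_Suc)

lemma sum_laguerre_squares:
  "(\<Sum>i<n. (laguerre i x)^2) =
     x * (laguerre1 n x)^2 - x * laguerre n x * laguerre1 n x + real n * (laguerre n x)^2"
proof (induction n)
  case (Suc n)
  define P T m where "P = laguerre n x" and "T = laguerre1 n x" and "m = real (Suc n)"
  have "m > 0" by (simp add: m_def)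
  have P': "laguerre (Suc n) x = P - x * T / m"
    by (simp add: laguerre_Suc P_def T_def m_def)
  have T': "laguerre1 (Suc n) x = T + (P - x * T / m)"
    by (simp add: laguerre1_Suc P' T_def)
  have n: "real n = m - 1"
    by (simp add: m_def)
  show ?case
    unfolding sum.lessThan_Suc Suc.IH P' T' P_def[symmetric] T_def[symmetric] m_def[symmetric] n
    using \<open>m > 0\<close> by (simp add: field_simps power2_eq_square)
qed simp

definition laguerre_lyapunov :: "nat \<Rightarrow> real \<Rightarrow> real" where
  "laguerre_lyapunov n x = x * (laguerre1 n x)^2 - (x + 1/2) * laguerre n x * laguerre1 n x
     + (real n + 1/2) * (laguerre n x)^2"

lemma laguerre_lyapunov_Suc_diff:
  "laguerre_lyapunov (Suc n) x - laguerre_lyapunov n x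
     = (laguerre n x)^2 / 2 + x * (laguerre1 n x)^2 / (2 * real (Suc n))"
proof -
  define P T m where "P = laguerre n x" and "T = laguerre1 n x" and "m = real (Suc n)"
  have "m > 0" by (simp add: m_def)
  have P': "laguerre (Suc n) x = P - x * T / m"
    by (simp add: laguerre_Suc P_def T_def m_def)
  have T': "laguerre1 (Suc n) x = T + (P - x * T / m)"
    by (simp add: laguerre1_Suc P' T_def)
  have n: "real n = m - 1"
    by (simp add: m_def)
  show ?thesis
    unfolding laguerre_lyapunov_def P' T' P_def[symmetric] T_def[symmetric] m_def[symmetric] n
    using \<open>m > 0\<close> by (simp add: field_simps power2_eq_square)
qed

lemma quadratic_form_nonneg:
  fixes a b c P T :: real
  assumes "a > 0" and "b^2 \<le> 4 * a * c"
  shows "0 \<le> a * P^2 + b * P * T + c * T^2"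
proof -
  have "4 * a * (a * P^2 + b * P * T + c * T^2) = (2 * a * P + b * T)^2 + (4 * a * c - b^2) * T^2"
    by (simp add: power2_eq_square algebra_simps)
  also have "\<dots> \<ge> 0"
    using assms(2) by (intro add_nonneg_nonneg mult_nonneg_nonneg) auto
  finally show ?thesis
    using assms(1) by (simp add: zero_le_mult_iff)
qed

text \<open>The condition \<open>(2x + 1)^2 \<le> 4x(n - 4)\<close> makes the discriminants of the quadratic forms
  in \<open>L_n(x)\<close> and \<open>L_n^(1)(x)\<close> below nonpositive.\<close>

context
  fixes x :: real and n :: nat
  assumes x: "x > 0" and large: "(2 * x + 1)^2 \<le> 4 * x * (real n - 4)"
begin

lemma laguerre_large_gt_4: "real n > 4"
proof (rule ccontr)
  assume "\<not> real n > 4"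
  then have "4 * x * (real n - 4) \<le> 0"
    using x by (simp add: mult_nonneg_nonpos)
  moreover have "(2 * x + 1)^2 > 0"
    using x by simp
  ultimately show False
    using large by linarith
qed

lemma laguerre_lyapunov_le_increment:
  "laguerre_lyapunov n x \<le> 3 * real n * (laguerre_lyapunov (Suc n) x - laguerre_lyapunov n x)"
proof -
  define P T r where "P = laguerre n x" and "T = laguerre1 n x" and "r = real n"
  have r: "r > 4"
    using laguerre_large_gt_4 by (simp add: r_def)
  have "((r + 1) * (2 * x + 1))^2 = (r + 1)^2 * (2 * x + 1)^2"
    by (simp add: power_mult_distrib)
  also have "\<dots> \<le> (r + 1)^2 * (4 * x * (r - 4))"
    using large by (intro mult_left_mono) (auto simp: r_def)
  also have "\<dots> \<le> 4 * ((r - 1) * (r + 1)) * (x * (r - 2))"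
    using x r by (simp add: power2_eq_square algebra_simps mult_left_mono)
  finally have "0 \<le> ((r - 1) * (r + 1)) * P^2 + ((r + 1) * (2 * x + 1)) * P * T + (x * (r - 2)) * T^2"
    using r by (intro quadratic_form_nonneg) auto
  also have "\<dots> = 2 * (r + 1) * (3 * r * (P^2 / 2 + x * T^2 / (2 * (r + 1)))
      - (x * T^2 - (x + 1/2) * P * T + (r + 1/2) * P^2))"
    using r by (simp add: field_simps power2_eq_square)
  finally have "x * T^2 - (x + 1/2) * P * T + (r + 1/2) * P^2
      \<le> 3 * r * (P^2 / 2 + x * T^2 / (2 * (r + 1)))"
    using r by (simp add: zero_le_mult_iff)
  moreover have "real (Suc n) = r + 1"
    by (simp add: r_def)
  ultimately show ?thesis
    unfolding laguerre_lyapunov_Suc_diff unfolding laguerre_lyapunov_def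
    by (simp add: P_def T_def r_def add.commute)
qed

lemma sum_laguerre_squares_le_lyapunov:
  "(\<Sum>i<n. (laguerre i x)^2) \<le> 2 * laguerre_lyapunov n x"
proof -
  have "(-(x + 1))^2 \<le> (2 * x + 1)^2"
    using x by (simp add: power2_eq_square algebra_simps)
  also have "\<dots> \<le> 4 * (real n + 1) * x"
    using x large by (simp add: algebra_simps)
  finally have "(-(x + 1))^2 \<le> 4 * (real n + 1) * x" .
  then have "0 \<le> (real n + 1) * (laguerre n x)^2 + (-(x + 1)) * laguerre n x * laguerre1 n x
      + x * (laguerre1 n x)^2"
    using laguerre_large_gt_4 by (intro quadratic_form_nonneg) auto
  then show ?thesis
    unfolding sum_laguerre_squares laguerre_lyapunov_def by (simp add: algebra_simps)
qed

lemma laguerre_lyapunov_le_sum_squares: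
  "laguerre_lyapunov n x \<le> 2 * (\<Sum>i<n. (laguerre i x)^2)"
proof -
  have "(-(x - 1/2))^2 \<le> (2 * x + 1)^2"
    using x by (simp add: power2_eq_square algebra_simps)
  also have "\<dots> \<le> 4 * (real n - 1/2) * x"
    using x large by (simp add: algebra_simps)
  finally have "(-(x - 1/2))^2 \<le> 4 * (real n - 1/2) * x" .
  then have "0 \<le> (real n - 1/2) * (laguerre n x)^2 + (-(x - 1/2)) * laguerre n x * laguerre1 n x
      + x * (laguerre1 n x)^2"
    using laguerre_large_gt_4 by (intro quadratic_form_nonneg) auto
  then show ?thesis
    unfolding sum_laguerre_squares laguerre_lyapunov_def by (simp add: algebra_simps)
qed

lemma laguerre_lyapunov_ge_half: "laguerre_lyapunov n x \<ge> 1/2"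
proof -
  have "n \<ge> 1"
    using laguerre_large_gt_4 by simp
  then have "(\<Sum>i\<in>{0}. (laguerre i x)^2) \<le> (\<Sum>i<n. (laguerre i x)^2)"
    by (intro sum_mono2) auto
  then show ?thesis
    using sum_laguerre_squares_le_lyapunov by simp
qed

end

lemma laguerre_large_mono:
  assumes "x > 0" and "(2 * x + 1)^2 \<le> 4 * x * (real m - 4)" and "m \<le> n"
  shows "(2 * x + 1)^2 \<le> 4 * x * (real n - 4)"
proof -
  have "4 * x * (real m - 4) \<le> 4 * x * (real n - 4)"
    using assms by (intro mult_left_mono) auto
  then show ?thesis
    using assms(2) by linarith
qed

lemma laguerre_lyapunov_ratio_mono:
  assumes x: "x > 0" and large: "(2 * x + 1)^2 \<le> 4 * x * (real n - 4)"
  shows "(laguerre_lyapunov n x)^3 / real n \<le> (laguerre_lyapunov (Suc n) x)^3 / real (Suc n)"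
proof -
  define V where "V = laguerre_lyapunov n x"
  have n: "real n > 0"
    using laguerre_large_gt_4[OF x large] by simp
  have V: "V \<ge> 0"
    using sum_laguerre_squares_le_lyapunov[OF x large] sum_nonneg[of "{..<n}" "\<lambda>i. (laguerre i x)^2"]
    by (simp add: V_def)
  have step: "V * (1 + 1 / (3 * real n)) \<le> laguerre_lyapunov (Suc n) x"
    using laguerre_lyapunov_le_increment[OF x large] n by (simp add: V_def field_simps)
  have "1 + 1 / real n \<le> (1 + 1 / (3 * real n))^3"
    using n by (simp add: power3_eq_cube field_simps)
  then have "V^3 * (1 + 1 / real n) \<le> V^3 * (1 + 1 / (3 * real n))^3"
    using V by (intro mult_left_mono) auto
  also have "\<dots> = (V * (1 + 1 / (3 * real n)))^3"
    by (simp add: power_mult_distrib)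
  also have "\<dots> \<le> (laguerre_lyapunov (Suc n) x)^3"
    using step V n by (intro power_mono) auto
  finally show ?thesis
    using n by (simp add: V_def field_simps)
qed

lemma laguerre_lyapunov_cube_growth:
  assumes x: "x > 0" and large: "(2 * x + 1)^2 \<le> 4 * x * (real m - 4)" and "m \<le> n"
  shows "(laguerre_lyapunov m x)^3 / real m \<le> (laguerre_lyapunov n x)^3 / real n"
  using \<open>m \<le> n\<close>
proof (induction n rule: dec_induct)
  case (step n)
  then show ?case
    using laguerre_lyapunov_ratio_mono[OF x laguerre_large_mono[OF x large, of n]] by simp
qed simp

lemma inverse_powr_three_quarters_le:
  fixes i :: real
  assumes "i \<ge> 1"
  shows "1 / i powr (3/4) \<le> 4 * (i powr (1/4) - (i - 1) powr (1/4))"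
proof -
  define a b where "a = i powr (1/4)" and "b = (i - 1) powr (1/4)"
  have "a > 0" and "0 \<le> b" and "b \<le> a"
    using assms by (auto simp: a_def b_def intro: powr_mono2)
  have "a^4 = i" and "a^3 = i powr (3/4)"
    using assms by (auto simp: a_def powr_power)
  moreover have "b^4 = i - 1"
    using assms by (cases "i = 1") (auto simp: b_def powr_power)
  moreover have "a^4 - b^4 = (a - b) * (a^3 + a^2 * b + a * b^2 + b^3)"
    by (simp add: eval_nat_numeral algebra_simps)
  ultimately have "1 = (a - b) * (a^3 + a^2 * b + a * b^2 + b^3)"
    by simp
  also have "\<dots> \<le> (a - b) * (4 * a^3)"
  proof (intro mult_left_mono)
    have "a^2 * b \<le> a^2 * a" and "a * b^2 \<le> a * a^2" and "b^3 \<le> a^3"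
      using \<open>0 \<le> b\<close> \<open>b \<le> a\<close> \<open>a > 0\<close> by (auto intro!: mult_left_mono power_mono)
    then show "a^3 + a^2 * b + a * b^2 + b^3 \<le> 4 * a^3"
      by (simp add: power2_eq_square power3_eq_cube)
  qed (use \<open>b \<le> a\<close> in simp)
  finally have "1 \<le> 4 * (a - b) * a^3"
    by (simp only: mult_ac)
  then have "1 / a^3 \<le> 4 * (a - b)"
    using \<open>a > 0\<close> by (simp add: divide_le_eq)
  then show ?thesis
    using \<open>a^3 = i powr (3/4)\<close> by (simp add: a_def b_def)
qed

lemma sum_inverse_powr_three_quarters_le:
  assumes "1 \<le> m" and "m \<le> n"
  shows "(\<Sum>i\<in>{m..<n}. 1 / real i powr (3/4)) \<le> 4 * real n powr (1/4)"
proof -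
  have "(\<Sum>i\<in>{m..<n}. 1 / real i powr (3/4)) \<le> 4 * real (n - 1) powr (1/4)"
    using \<open>m \<le> n\<close>
  proof (induction n rule: dec_induct)
    case (step n)
    have "real n \<ge> 1"
      using \<open>1 \<le> m\<close> step.hyps(1) by simp
    then show ?case
      using step.IH inverse_powr_three_quarters_le[of "real n"] step.hyps(1) by (simp add: of_nat_diff)
  qed simp
  also have "\<dots> \<le> 4 * real n powr (1/4)"
    by (auto intro!: powr_mono2)
  finally show ?thesis .
qed

lemma sum_le_of_three_quarters_decay:
  fixes f :: "nat \<Rightarrow> real"
  assumes decay: "\<And>i. i \<ge> m \<Longrightarrow> f i \<le> K / real i powr (3/4)"
    and nonneg: "\<And>i. f i \<ge> 0" and "1 \<le> m" and "m \<le> n"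
  shows "(\<Sum>i<n. f i) \<le> ((\<Sum>i<m. f i) + 4 * K) * real n powr (1/4)"
proof -
  have "0 \<le> K / real m powr (3/4)"
    using decay[of m] nonneg[of m] by simp
  then have "K \<ge> 0"
    using \<open>1 \<le> m\<close> by (simp add: zero_le_divide_iff)
  have "(\<Sum>i<n. f i) = (\<Sum>i<m. f i) + (\<Sum>i\<in>{m..<n}. f i)"
    using \<open>m \<le> n\<close> by (metis atLeast0LessThan sum.atLeastLessThan_concat zero_le)
  also have "(\<Sum>i\<in>{m..<n}. f i) \<le> K * (\<Sum>i\<in>{m..<n}. 1 / real i powr (3/4))"
    unfolding sum_distrib_left using decay by (intro sum_mono) simp
  also have "\<dots> \<le> K * (4 * real n powr (1/4))"
    using sum_inverse_powr_three_quarters_le[OF \<open>1 \<le> m\<close> \<open>m \<le> n\<close>] \<open>K \<ge> 0\<close> by (rule mult_left_mono)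
  also have "(\<Sum>i<m. f i) \<le> (\<Sum>i<m. f i) * real n powr (1/4)"
    using sum_nonneg[of "{..<m}" f] nonneg \<open>1 \<le> m\<close> \<open>m \<le> n\<close>
    by (simp add: mult_le_cancel_left1 ge_one_powr_ge_zero)
  finally show ?thesis
    by (simp add: algebra_simps)
qed

lemma eventually_laguerre_large:
  assumes "x > 0"
  shows "\<forall>\<^sub>F n in sequentially. (2 * x + 1)^2 \<le> 4 * x * (real n - 4)"
proof (rule eventually_sequentiallyI)
  fix n assume "nat \<lceil>4 + (2 * x + 1)^2 / (4 * x)\<rceil> \<le> n"
  then have "(2 * x + 1)^2 / (4 * x) \<le> real n - 4"
    by linarith
  then show "(2 * x + 1)^2 \<le> 4 * x * (real n - 4)"
    using assms by (simp add: divide_le_eq mult.commute)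
qed

lemma sum_laguerre_squares_cube_growth:
  assumes x: "x > 0" and large: "(2 * x + 1)^2 \<le> 4 * x * (real m - 4)" and "m \<le> n"
  shows "(laguerre_lyapunov m x)^3 / real m * real n \<le> 8 * (\<Sum>i<n. (laguerre i x)^2)^3"
proof -
  note large_n = laguerre_large_mono[OF x large \<open>m \<le> n\<close>]
  have "real n > 0"
    using laguerre_large_gt_4[OF x large_n] by simp
  then have "(laguerre_lyapunov m x)^3 / real m * real n \<le> (laguerre_lyapunov n x)^3"
    using laguerre_lyapunov_cube_growth[OF x large \<open>m \<le> n\<close>] by (simp add: field_simps)
  also have "\<dots> \<le> (2 * (\<Sum>i<n. (laguerre i x)^2))^3"
    using laguerre_lyapunov_le_sum_squares[OF x large_n] laguerre_lyapunov_ge_half[OF x large_n]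
    by (intro power_mono) auto
  finally show ?thesis
    by (simp add: power_mult_distrib)
qed

lemma laguerre_not_eventually_small:
  assumes x: "x > 0"
  shows "\<not> (\<forall>\<^sub>F n in sequentially. (laguerre n x)^2 \<le> K / real n powr (3/4))"
proof
  assume "\<forall>\<^sub>F n in sequentially. (laguerre n x)^2 \<le> K / real n powr (3/4)"
  then have "\<forall>\<^sub>F n in sequentially.
      (laguerre n x)^2 \<le> K / real n powr (3/4) \<and> (2 * x + 1)^2 \<le> 4 * x * (real n - 4)"
    using eventually_laguerre_large[OF x] by (rule eventually_conj)
  then obtain m where m: "\<And>n. n \<ge> m \<Longrightarrow>
      (laguerre n x)^2 \<le> K / real n powr (3/4) \<and> (2 * x + 1)^2 \<le> 4 * x * (real n - 4)"
    unfolding eventually_sequentially by blast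
  then have small: "\<And>n. n \<ge> m \<Longrightarrow> (laguerre n x)^2 \<le> K / real n powr (3/4)"
    and large: "(2 * x + 1)^2 \<le> 4 * x * (real m - 4)"
    by auto
  have "m \<ge> 1"
    using laguerre_large_gt_4[OF x large] by simp
  define B c where "B = (\<Sum>i<m. (laguerre i x)^2) + 4 * K" and "c = (laguerre_lyapunov m x)^3 / real m"
  have "c > 0"
    using laguerre_lyapunov_ge_half[OF x large] \<open>m \<ge> 1\<close> by (simp add: c_def)
  have bound: "c * real n powr (1/4) \<le> 8 * B^3" if "n \<ge> m" for n
  proof -
    have n: "real n \<ge> 1"
      using that \<open>m \<ge> 1\<close> by simp
    have "c * real n \<le> 8 * (\<Sum>i<n. (laguerre i x)^2)^3"
      using sum_laguerre_squares_cube_growth[OF x large that] by (simp add: c_def)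
    also have "\<dots> \<le> 8 * (B * real n powr (1/4))^3"
      using sum_le_of_three_quarters_decay[of m "\<lambda>i. (laguerre i x)^2", OF small _ \<open>m \<ge> 1\<close> that]
        sum_nonneg[of "{..<n}" "\<lambda>i. (laguerre i x)^2"]
      by (intro mult_left_mono power_mono) (auto simp: B_def)
    also have "(B * real n powr (1/4))^3 = B^3 * real n powr (3/4)"
      using n powr_power[of "real n" "1/4" 3] by (simp add: power_mult_distrib)
    finally have "c * (real n powr (1/4) * real n powr (3/4)) \<le> 8 * B^3 * real n powr (3/4)"
      using n by (simp add: powr_add[symmetric])
    then show ?thesis
      using n by (simp add: mult.assoc[symmetric])
  qed
  have "filterlim (\<lambda>n. real n powr (1/4)) at_top sequentially"
    by real_asymp
  then have "\<forall>\<^sub>F n in sequentially. 8 * B^3 / c < real n powr (1/4)"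
    by (simp add: filterlim_at_top_dense)
  then obtain n where "n \<ge> m" and "8 * B^3 / c < real n powr (1/4)"
    by (metis eventually_sequentially order_refl le_cases)
  then show False
    using bound[of n] \<open>c > 0\<close> by (simp add: divide_less_eq mult.commute)
qed

lemma laguerre_frequently_large:
  assumes "x \<ge> 0"
  shows "infinite {n. \<bar>laguerre n x\<bar> \<ge> 1 / real n powr (3/8)}"
proof (cases "x = 0")
  case True
  have "1 / real n powr (3/8) \<le> 1" for n
    by (cases n) (auto simp: ge_one_powr_ge_zero)
  then show ?thesis
    using True by simp
next
  case False
  then have "x > 0"
    using assms by simp
  have "\<exists>\<^sub>F n in sequentially. \<bar>laguerre n x\<bar> \<ge> 1 / real n powr (3/8)"
  proof (rule ccontr)
    assume "\<not> ?thesis"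
    then have "\<forall>\<^sub>F n in sequentially. \<bar>laguerre n x\<bar> < 1 / real n powr (3/8)"
      by (simp add: not_frequently not_le)
    then have "\<forall>\<^sub>F n in sequentially. (laguerre n x)^2 \<le> 1 / real n powr (3/4)"
    proof (rule eventually_mono)
      fix n assume "\<bar>laguerre n x\<bar> < 1 / real n powr (3/8)"
      then have "\<bar>laguerre n x\<bar>^2 \<le> (1 / real n powr (3/8))^2"
        by (intro power_mono) auto
      moreover have "(real n powr (3/8))^2 = real n powr (3/4)" if "n > 0"
        using that powr_power[of "real n" "3/8" 2] by simp
      ultimately show "(laguerre n x)^2 \<le> 1 / real n powr (3/4)"
        by (cases "n = 0") (simp_all add: power_divide)
    qed
    then show False
      using laguerre_not_eventually_small[OF \<open>x > 0\<close>] by blast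
  qed
  then show ?thesis
    by (simp add: frequently_cofinite[symmetric] cofinite_eq_sequentially)
qed

lemma laguerre_reversed: "laguerre n x = (\<Sum>m\<le>n. real (n choose m) * (-x)^(n - m) / fact (n - m))"
proof -
  have "laguerre n x = (\<Sum>i=0..n. real (n choose (n + 0 - i)) * (-x)^(n + 0 - i) / fact (n + 0 - i))"
    unfolding laguerre_def atMost_atLeast0 by (rule sum.atLeastAtMost_rev)
  also have "\<dots> = (\<Sum>m=0..n. real (n choose m) * (-x)^(n - m) / fact (n - m))"
    by (intro sum.cong refl) (simp add: binomial_symmetric[symmetric])
  finally show ?thesis
    unfolding atMost_atLeast0 .
qed

lemma weyl_matrix_diag: "weyl_matrix u n n = of_real (exp (- ((cmod u)^2/2)) * laguerre n ((cmod u)^2))"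
proof -
  define x where "x = (cmod u)^2"
  have u_cnj: "u * cnj u = of_real x"
    unfolding x_def by (rule complex_norm_square[symmetric])
  have "of_real (sqrt (fact n) * sqrt (fact n)) * poly_exp_coeff u (- cnj u) n n
      = (\<Sum>m\<le>n. of_real (real (n choose m) * (-x)^(n - m) / fact (n - m)) :: complex)"
    unfolding poly_exp_coeff_eq min.idem sum_distrib_left
  proof (intro sum.cong refl)
    fix m assume "m \<in> {..n}"
    then have binom: "real (n choose m) = fact n / (fact m * fact (n - m))"
      by (simp add: binomial_fact)
    have pow: "u^(n - m) * (- cnj u)^(n - m) = of_real ((-x)^(n - m))"
      by (simp add: power_mult_distrib[symmetric] u_cnj)
    show "of_real (sqrt (fact n) * sqrt (fact n)) * (u^(n - m) * (- cnj u)^(n - m) / (fact m * fact (n - m) * fact (n - m)))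
        = (of_real (real (n choose m) * (-x)^(n - m) / fact (n - m)) :: complex)"
      unfolding pow binom by (simp add: field_simps)
  qed
  also have "\<dots> = of_real (laguerre n x)"
    unfolding laguerre_reversed of_real_sum ..
  finally show ?thesis
    unfolding weyl_matrix_def x_def by (simp add: mult.assoc)
qed

theorem propositionA3:
  fixes u :: complex
  shows "\<exists>C>0. infinite {j::nat. cmod (weyl_elem u j j) \<ge> C / (real j powr (3/8))}"
proof -
  define x where "x = (cmod u)^2"
  have diag: "cmod (weyl_elem u j j) = exp (- (x/2)) * \<bar>laguerre j x\<bar>" for j
    unfolding weyl_elem_eq_weyl_matrix weyl_matrix_diag x_def norm_of_real by (simp add: abs_mult)
  have "{j. \<bar>laguerre j x\<bar> \<ge> 1 / real j powr (3/8)}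
      \<subseteq> {j. cmod (weyl_elem u j j) \<ge> exp (- (x/2)) / real j powr (3/8)}"
    using mult_left_mono[of "1 / real _ powr (3/8)" _ "exp (- (x/2))"] by (auto simp: diag)
  moreover have "infinite {j. \<bar>laguerre j x\<bar> \<ge> 1 / real j powr (3/8)}"
    by (rule laguerre_frequently_large) (simp add: x_def)
  ultimately show ?thesis
    by (intro exI[of _ "exp (- (x/2))"]) (auto dest: infinite_super)
qed

end
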